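(* Let $(G,J,g)$ be a $2$-step nilpotent Lie group equipped with a left-invariant Hermitian structure $(J,g)$, with Lie algebra $(\mathfrak g,\mu)$, and assume that $J\mu(\mathfrak g,\mathfrak g)$ is contained in the center of $\mathfrak g$. Then, with respect to any left-invariant, $g$-unitary $(1,0)$-frame $\{Z_1,\dots,Z_n\}$ on $G$ (with $Z_{\bar j}=\overline{Z_j}$), and summing over repeated indices $r,s$, $$\Theta(g)(Z_j,Z_{\bar k})=g\big(\mu(Z_s,Z_{\bar r})^{0,1},Z_j\big)\,g\big(\mu(Z_{\bar s},Z_r)^{1,0},Z_{\bar k}\big)+\tfrac12\,g\big(\mu(Z_{\bar s},Z_{\bar r}),Z_j\big)\,g\big(\mu(Z_s,Z_r),Z_{\bar k}\big).$$
   Context: $g$, $J$, $\mu$ are extended complex (bi)linearly to $\mathfrak g\otimes\mathbb C=\mathfrak g^{1,0}\oplus\mathfrak g^{0,1}$, and $X^{1,0},X^{0,1}$ denote the components of $X$. For the Hermitian metric $g$ with Chern connection $\nabla$ (the unique connection preserving $g$ and $J$ whose torsion has vanishing $(1,1)$-part), curvature $\Omega$ and torsion $T$ with $T_{js\bar p}=g_{l\bar p}T^l_{js}$, set $S(g)_{j\bar k}=g^{\bar rs}\Omega_{s\bar rj\bar k}$, $Q^2(g)_{j\bar k}=g^{\bar pq}g^{\bar rs}T_{sq\bar k}T_{\overline{rp}j}$ and $\Theta(g)=S(g)+\frac12 Q^2(g)$. *)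

theory Defs
  imports "HOL-Analysis.Analysis"
begin

text \<open>The real Lie algebra of the Lie group is modelled as real^'m (any finite-dimensional
real vector space); left-invariant objects are identified with their values on the Lie algebra.
The complexification is complex^'m, and all real (bi)linear data are extended complex
(bi)linearly via the standard basis.\<close>

definition cplx :: "real^'m \<Rightarrow> complex^'m" where
  "cplx v = (\<chi> i. complex_of_real (v $ i))"

definition conjv :: "complex^'m \<Rightarrow> complex^'m" where
  "conjv z = (\<chi> i. cnj (z $ i))"

definition ext1 :: "(real^'m \<Rightarrow> real^'m) \<Rightarrow> complex^'m \<Rightarrow> complex^'m" where
  "ext1 L z = (\<Sum>i\<in>UNIV. (z $ i) *s cplx (L (axis i 1)))"

definition ext2 :: "(real^'m \<Rightarrow> real^'m \<Rightarrow> real^'m) \<Rightarrow> complex^'m \<Rightarrow> complex^'m \<Rightarrow> complex^'m" where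
  "ext2 B z w = (\<Sum>i\<in>UNIV. \<Sum>j\<in>UNIV. (z $ i * w $ j) *s cplx (B (axis i 1) (axis j 1)))"

definition extf :: "(real^'m \<Rightarrow> real^'m \<Rightarrow> real) \<Rightarrow> complex^'m \<Rightarrow> complex^'m \<Rightarrow> complex" where
  "extf F z w = (\<Sum>i\<in>UNIV. \<Sum>j\<in>UNIV. z $ i * w $ j * complex_of_real (F (axis i 1) (axis j 1)))"

definition p10 :: "(real^'m \<Rightarrow> real^'m) \<Rightarrow> complex^'m \<Rightarrow> complex^'m" where
  "p10 J z = (1/2 :: complex) *s (z - \<i> *s ext1 J z)"

definition p01 :: "(real^'m \<Rightarrow> real^'m) \<Rightarrow> complex^'m \<Rightarrow> complex^'m" where
  "p01 J z = (1/2 :: complex) *s (z + \<i> *s ext1 J z)"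

definition lie_algebra :: "(real^'m \<Rightarrow> real^'m \<Rightarrow> real^'m) \<Rightarrow> bool" where
  "lie_algebra mu \<longleftrightarrow> bilinear mu \<and> (\<forall>X. mu X X = 0) \<and>
     (\<forall>X Y Z. mu X (mu Y Z) + mu Y (mu Z X) + mu Z (mu X Y) = 0)"

definition two_step_nilpotent :: "(real^'m \<Rightarrow> real^'m \<Rightarrow> real^'m) \<Rightarrow> bool" where
  "two_step_nilpotent mu \<longleftrightarrow> (\<forall>X Y Z. mu (mu X Y) Z = 0) \<and> (\<exists>X Y. mu X Y \<noteq> 0)"

definition complex_structure :: "(real^'m \<Rightarrow> real^'m \<Rightarrow> real^'m) \<Rightarrow> (real^'m \<Rightarrow> real^'m) \<Rightarrow> bool" where
  "complex_structure mu J \<longleftrightarrow> linear J \<and> (\<forall>X. J (J X) = - X) \<and>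
     (\<forall>X Y. mu (J X) (J Y) - J (mu (J X) Y) - J (mu X (J Y)) - mu X Y = 0)"

definition hermitian_metric :: "(real^'m \<Rightarrow> real^'m) \<Rightarrow> (real^'m \<Rightarrow> real^'m \<Rightarrow> real) \<Rightarrow> bool" where
  "hermitian_metric J g \<longleftrightarrow> bilinear g \<and> (\<forall>X Y. g X Y = g Y X) \<and>
     (\<forall>X. X \<noteq> 0 \<longrightarrow> g X X > 0) \<and> (\<forall>X Y. g (J X) (J Y) = g X Y)"

text \<open>Complexified torsion and curvature of a left-invariant connection nab (nab X Y = \<nabla>_X Y
for left-invariant fields).\<close>
definition torsC where
  "torsC mu nab X Y = ext2 nab X Y - ext2 nab Y X - ext2 mu X Y"

definition curvC where
  "curvC mu nab X Y W = ext2 nab X (ext2 nab Y W) - ext2 nab Y (ext2 nab X W) - ext2 nab (ext2 mu X Y) W"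

definition chern_connection ::
  "(real^'m \<Rightarrow> real^'m \<Rightarrow> real^'m) \<Rightarrow> (real^'m \<Rightarrow> real^'m) \<Rightarrow> (real^'m \<Rightarrow> real^'m \<Rightarrow> real)
    \<Rightarrow> (real^'m \<Rightarrow> real^'m \<Rightarrow> real^'m) \<Rightarrow> bool" where
  "chern_connection mu J g nab \<longleftrightarrow> bilinear nab \<and>
     (\<forall>X Y W. g (nab X Y) W + g Y (nab X W) = 0) \<and>
     (\<forall>X Y. nab X (J Y) = J (nab X Y)) \<and>
     (\<forall>z w. torsC mu nab (p10 J z) (p01 J w) = 0)"

definition unitary_frame :: "(real^'m \<Rightarrow> real^'m) \<Rightarrow> (real^'m \<Rightarrow> real^'m \<Rightarrow> real) \<Rightarrow> nat \<Rightarrow> (nat \<Rightarrow> complex^'m) \<Rightarrow> bool" where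
  "unitary_frame J g n Z \<longleftrightarrow> CARD('m) = 2 * n \<and>
     (\<forall>j<n. ext1 J (Z j) = \<i> *s Z j) \<and>
     (\<forall>j<n. \<forall>k<n. extf g (Z j) (conjv (Z k)) = (if j = k then 1 else 0))"

text \<open>Theta(g)(Z_j, Z_{bar k}) = S_{j bar k} + 1/2 Q^2_{j bar k}, written in the unitary frame Z
(where g^{bar r s} = delta_{rs}).\<close>
definition S_chern where
  "S_chern mu g nab n Z j k =
     (\<Sum>r<n. extf g (curvC mu nab (Z r) (conjv (Z r)) (Z j)) (conjv (Z k)))"

definition Q2 where
  "Q2 mu g nab n Z j k =
     (\<Sum>r<n. \<Sum>p<n. extf g (torsC mu nab (Z r) (Z p)) (conjv (Z k)) *
                    extf g (torsC mu nab (conjv (Z r)) (conjv (Z p))) (Z j))"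

definition Theta where
  "Theta mu g nab n Z j k = S_chern mu g nab n Z j k + (1/2) * Q2 mu g nab n Z j k"

end

(*
  For X of type (1,0) and Y of type (0,1), the vanishing (1,1)-torsion of the Chern connection
  together with J nabla = nabla J forces nabla_X Y = mu(X,Y)^{0,1} and nabla_Y X = mu(Y,X)^{1,0}.
  Metric compatibility then turns every term of S and Q^2 in the unitary frame into pairings of
  brackets; the unknown derivatives nabla_{Z_r} Z_j are of type (1,0) and are eliminated by
  expanding them in the frame. Since mu(g,g) and J mu(g,g) are central, so are the (1,0)- and
  (0,1)-parts of every bracket, and every term in which such a part is bracketed again vanishes.
  Apart from the claimed terms, only K = sum_r g(mu(Z_r,Z_kbar)^{0,1}, mu(Z_rbar,Z_j)^{1,0})
  survives; it enters S with coefficient -1 and Q^2 with coefficient 2, so it cancels in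
  Theta = S + Q^2/2.
*)

theory Submission
  imports Defs
begin

section \<open>Complexification of real multilinear maps\<close>

lemma cplx_nth [simp]: "cplx v $ i = complex_of_real (v $ i)"
  by (simp add: cplx_def)

lemma conjv_nth [simp]: "conjv z $ i = cnj (z $ i)"
  by (simp add: conjv_def)

lemma cplx_minus: "cplx (- x) = - cplx x"
  by (simp add: vec_eq_iff)

lemma conjv_ext1: "conjv (ext1 L X) = ext1 L (conjv X)"
  by (simp add: vec_eq_iff ext1_def)

lemma cplx_axis: "cplx (axis i 1) = axis i 1"
  by (simp add: vec_eq_iff axis_def)

lemma ext1_linear: "Vector_Spaces.linear (*s) (*s) (ext1 L)"
  by (simp add: Vector_Spaces.linear_iff vec.vector_space_axioms vec_eq_iff ext1_def
      algebra_simps sum.distrib sum_distrib_left)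

lemma ext2_linear_left: "Vector_Spaces.linear (*s) (*s) (\<lambda>X. ext2 B X Y)"
  by (simp add: Vector_Spaces.linear_iff vec.vector_space_axioms vec_eq_iff ext2_def
      algebra_simps sum.distrib sum_distrib_left)

lemma ext2_linear_right: "Vector_Spaces.linear (*s) (*s) (ext2 B X)"
  by (simp add: Vector_Spaces.linear_iff vec.vector_space_axioms vec_eq_iff ext2_def
      algebra_simps sum.distrib sum_distrib_left)

lemma extf_linear_left: "Vector_Spaces.linear (*s) (*) (\<lambda>X. extf F X Y)"
  by (simp add: Vector_Spaces.linear_iff vec.vector_space_axioms
      vector_space_over_itself.vector_space_axioms extf_def algebra_simps sum.distrib sum_distrib_left)

lemma extf_linear_right: "Vector_Spaces.linear (*s) (*) (extf F X)"
  by (simp add: Vector_Spaces.linear_iff vec.vector_space_axioms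
      vector_space_over_itself.vector_space_axioms extf_def algebra_simps sum.distrib sum_distrib_left)

lemma p10_linear: "Vector_Spaces.linear (*s) (*s) (p10 J)"
  by (simp add: Vector_Spaces.linear_iff vec.vector_space_axioms p10_def
      vec.linear_add[OF ext1_linear] vec.linear_scale[OF ext1_linear] vec_eq_iff algebra_simps)

lemma p01_linear: "Vector_Spaces.linear (*s) (*s) (p01 J)"
  by (simp add: Vector_Spaces.linear_iff vec.vector_space_axioms p01_def
      vec.linear_add[OF ext1_linear] vec.linear_scale[OF ext1_linear] vec_eq_iff algebra_simps)

lemmas linear_hom_simps =
  module_hom.add module_hom.diff module_hom.neg module_hom.scale module_hom.zero module_hom.sum

lemmas complexified_linear =
  linear_hom_simps[OF ext1_linear[unfolded Vector_Spaces.linear_iff_module_hom]]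
  linear_hom_simps[OF ext2_linear_left[unfolded Vector_Spaces.linear_iff_module_hom]]
  linear_hom_simps[OF ext2_linear_right[unfolded Vector_Spaces.linear_iff_module_hom]]
  linear_hom_simps[OF extf_linear_left[unfolded Vector_Spaces.linear_iff_module_hom]]
  linear_hom_simps[OF extf_linear_right[unfolded Vector_Spaces.linear_iff_module_hom]]
  linear_hom_simps[OF p10_linear[unfolded Vector_Spaces.linear_iff_module_hom]]
  linear_hom_simps[OF p01_linear[unfolded Vector_Spaces.linear_iff_module_hom]]

lemmas complexification_rules =
  Vector_Spaces.linear_iff vec.vector_space_axioms vector_space_over_itself.vector_space_axioms
  complexified_linear distrib_left

lemma linear_basis_expansion:
  assumes "linear L"
  shows "L x = (\<Sum>i\<in>UNIV. x $ i *\<^sub>R L (axis i 1))"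
proof -
  have "L x = L (\<Sum>i\<in>UNIV. x $ i *\<^sub>R axis i 1)"
    using basis_expansion[of x] by (simp add: scalar_mult_eq_scaleR)
  then show ?thesis
    by (simp add: linear_sum[OF assms] linear_scale[OF assms])
qed

lemma bilinear_basis_expansion:
  assumes "bilinear B"
  shows "B x y = (\<Sum>i\<in>UNIV. \<Sum>j\<in>UNIV. (x $ i * y $ j) *\<^sub>R B (axis i 1) (axis j 1))"
proof -
  have "B x y = (\<Sum>i\<in>UNIV. x $ i *\<^sub>R B (axis i 1) y)"
    using assms by (intro linear_basis_expansion) (simp add: bilinear_def)
  also have "\<dots> = (\<Sum>i\<in>UNIV. x $ i *\<^sub>R (\<Sum>j\<in>UNIV. y $ j *\<^sub>R B (axis i 1) (axis j 1)))"
    using assms by (subst linear_basis_expansion[of "B _" y]) (simp_all add: bilinear_def)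
  finally show ?thesis
    by (simp add: scaleR_sum_right)
qed

lemma ext1_cplx: "linear L \<Longrightarrow> ext1 L (cplx x) = cplx (L x)"
  by (subst linear_basis_expansion[of L x]) (simp_all add: vec_eq_iff ext1_def)

lemma ext2_cplx: "bilinear B \<Longrightarrow> ext2 B (cplx x) (cplx y) = cplx (B x y)"
  by (subst bilinear_basis_expansion[of B x y]) (simp_all add: vec_eq_iff ext2_def)

lemma extf_cplx: "bilinear F \<Longrightarrow> extf F (cplx x) (cplx y) = complex_of_real (F x y)"
  by (subst bilinear_basis_expansion[of F x y]) (simp_all add: extf_def)

lemma complexification_eqI:
  fixes f h :: "complex^'m \<Rightarrow> 'b::ab_group_add"
  assumes f: "Vector_Spaces.linear (*s) s f" and h: "Vector_Spaces.linear (*s) s h"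
    and real: "\<And>x. f (cplx x) = h (cplx x)"
  shows "f X = h X"
proof -
  interpret f: Vector_Spaces.linear "(*s)" s f by (fact f)
  interpret h: Vector_Spaces.linear "(*s)" s h by (fact h)
  have "f X = f (\<Sum>i\<in>UNIV. X $ i *s cplx (axis i 1))"
    by (simp add: cplx_axis basis_expansion)
  also have "\<dots> = h (\<Sum>i\<in>UNIV. X $ i *s cplx (axis i 1))"
    by (simp add: f.sum f.scale h.sum h.scale real)
  also have "\<dots> = h X"
    by (simp add: cplx_axis basis_expansion)
  finally show ?thesis .
qed

lemma complexification_eqI2:
  fixes f h :: "complex^'m \<Rightarrow> complex^'m \<Rightarrow> 'b::ab_group_add"
  assumes "\<And>Y. Vector_Spaces.linear (*s) s (\<lambda>X. f X Y)" "\<And>X. Vector_Spaces.linear (*s) s (f X)"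
    and "\<And>Y. Vector_Spaces.linear (*s) s (\<lambda>X. h X Y)" "\<And>X. Vector_Spaces.linear (*s) s (h X)"
    and "\<And>x y. f (cplx x) (cplx y) = h (cplx x) (cplx y)"
  shows "f X Y = h X Y"
proof -
  have real_left: "f (cplx x) Y = h (cplx x) Y" for x
    by (rule complexification_eqI[of s "f (cplx x)" "h (cplx x)"]) (simp_all add: assms)
  show ?thesis
    by (rule complexification_eqI[of s "\<lambda>X. f X Y" "\<lambda>X. h X Y"]) (simp_all add: assms real_left)
qed

lemma ext2_cplx_left_eq_0:
  assumes "bilinear B" and "\<And>w. B v w = 0"
  shows "ext2 B (cplx v) W = 0"
proof (rule complexification_eqI[of "(*s)" "ext2 B (cplx v)" "\<lambda>W. 0"])
  show "ext2 B (cplx v) (cplx w) = 0" for w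
    using assms by (simp add: ext2_cplx vec_eq_iff)
qed (simp_all add: complexification_rules)

lemma biorthogonal_expansion:
  fixes v :: "'i \<Rightarrow> 'a::field^'n" and \<phi> :: "'i \<Rightarrow> 'a^'n \<Rightarrow> 'a"
  assumes fin: "finite I" and card: "card I = CARD('n)"
    and lin: "\<And>a. a \<in> I \<Longrightarrow> Vector_Spaces.linear (*s) (*) (\<phi> a)"
    and biorth: "\<And>a b. a \<in> I \<Longrightarrow> b \<in> I \<Longrightarrow> \<phi> a (v b) = (if a = b then 1 else 0)"
  shows "x = (\<Sum>a\<in>I. \<phi> a x *s v a)"
proof -
  have inj: "inj_on v I"
    by (rule inj_onI) (metis biorth zero_neq_one)
  have coeff: "\<phi> a (\<Sum>b\<in>I. c b *s v b) = c a" if "a \<in> I" for a c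
  proof -
    interpret \<phi>: Vector_Spaces.linear "(*s)" "(*)" "\<phi> a" using lin[OF that] .
    show ?thesis
      using fin that by (simp add: \<phi>.sum \<phi>.scale biorth if_distrib cong: if_cong)
  qed
  have "vec.independent (v ` I)"
  proof (rule vec.independent_if_scalars_zero)
    fix c y assume sum0: "(\<Sum>y\<in>v ` I. c y *s y) = 0" and "y \<in> v ` I"
    then obtain a where a: "a \<in> I" "y = v a" by blast
    have "c y = \<phi> a (\<Sum>b\<in>I. c (v b) *s v b)"
      using coeff[OF a(1)] a(2) by simp
    also have "\<dots> = \<phi> a 0"
      using sum0 by (simp add: sum.reindex[OF inj])
    finally show "c y = 0"
      using lin[OF a(1)] by (simp add: Vector_Spaces.linear_iff_module_hom module_hom.zero)
  qed (use fin in simp)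
  then have span: "vec.span (v ` I) = UNIV"
    using vec.card_eq_dim[of "v ` I" UNIV] fin card inj
    by (auto simp: card_image card_cart_basis)
  define R where "R x = x - (\<Sum>a\<in>I. \<phi> a x *s v a)" for x
  have "Vector_Spaces.linear (*s) (*s) R"
    using lin by (simp add: Vector_Spaces.linear_iff vec.vector_space_axioms R_def
        Vector_Spaces.linear_iff_module_hom module_hom.add module_hom.scale
        sum.distrib vec.scale_sum_right algebra_simps)
  moreover have "R y = 0" if "y \<in> v ` I" for y
    using that fin by (auto simp: R_def biorth if_distrib[of "\<lambda>c. c *s _"] cong: if_cong)
  ultimately have "R x = 0"
    using vec.linear_eq_0_on_span span by blast
  then show ?thesis
    by (simp add: R_def)
qed

section \<open>Hermitian structures and the Chern connection\<close>

definition type10 :: "(real^'m \<Rightarrow> real^'m) \<Rightarrow> complex^'m \<Rightarrow> bool" where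
  "type10 J X \<longleftrightarrow> ext1 J X = \<i> *s X"

definition type01 :: "(real^'m \<Rightarrow> real^'m) \<Rightarrow> complex^'m \<Rightarrow> bool" where
  "type01 J X \<longleftrightarrow> ext1 J X = - \<i> *s X"

lemma p10_type10: "type10 J X \<Longrightarrow> p10 J X = X"
  by (simp add: type10_def p10_def vec_eq_iff algebra_simps)

lemma p01_type10: "type10 J X \<Longrightarrow> p01 J X = 0"
  by (simp add: type10_def p01_def vec_eq_iff algebra_simps)

lemma p01_type01: "type01 J X \<Longrightarrow> p01 J X = X"
  by (simp add: type01_def p01_def vec_eq_iff algebra_simps)

lemma p10_type01: "type01 J X \<Longrightarrow> p10 J X = 0"
  by (simp add: type01_def p10_def vec_eq_iff algebra_simps)

lemma p10_plus_p01: "p10 J X + p01 J X = X"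
  by (simp add: p10_def p01_def vec_eq_iff algebra_simps)

locale hermitian_chern =
  fixes mu :: "real^'m \<Rightarrow> real^'m \<Rightarrow> real^'m"
    and J :: "real^'m \<Rightarrow> real^'m"
    and g :: "real^'m \<Rightarrow> real^'m \<Rightarrow> real"
    and nab :: "real^'m \<Rightarrow> real^'m \<Rightarrow> real^'m"
  assumes lie: "lie_algebra mu"
    and cs: "complex_structure mu J"
    and hm: "hermitian_metric J g"
    and chern: "chern_connection mu J g nab"
begin

abbreviation "gC \<equiv> extf g"
abbreviation "brC \<equiv> ext2 mu"
abbreviation "nabC \<equiv> ext2 nab"

lemma J_linear: "linear J"
  using cs by (simp add: complex_structure_def)

lemma mu_bilinear: "bilinear mu"
  using lie by (simp add: lie_algebra_def)

lemma g_bilinear: "bilinear g"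
  using hm by (simp add: hermitian_metric_def)

lemma nab_bilinear: "bilinear nab"
  using chern by (simp add: chern_connection_def)

lemma mu_antisym: "mu x y = - mu y x"
proof -
  have "mu x x = 0" "mu y y = 0" "mu (x + y) (x + y) = 0"
    using lie by (simp_all add: lie_algebra_def)
  then show ?thesis
    using mu_bilinear
    by (simp add: bilinear_ladd bilinear_radd eq_neg_iff_add_eq_0 algebra_simps)
qed

lemma J_J: "J (J x) = - x"
  using cs by (simp add: complex_structure_def)

lemma ext1_J_J: "ext1 J (ext1 J X) = - X"
proof (rule complexification_eqI[of "(*s)" "\<lambda>X. ext1 J (ext1 J X)" "\<lambda>X. - X"])
  show "ext1 J (ext1 J (cplx x)) = - cplx x" for x
    by (simp add: ext1_cplx J_linear J_J cplx_minus)
qed (simp_all add: complexification_rules)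

lemma brC_antisym: "brC X Y = - brC Y X"
proof (rule complexification_eqI2[of "(*s)" brC "\<lambda>X Y. - brC Y X"])
  show "brC (cplx x) (cplx y) = - brC (cplx y) (cplx x)" for x y
    using mu_antisym[of x y] by (simp add: ext2_cplx mu_bilinear cplx_minus)
qed (simp_all add: complexification_rules)

lemma gC_sym: "gC X Y = gC Y X"
proof (rule complexification_eqI2[of "(*)" gC "\<lambda>X Y. gC Y X"])
  show "gC (cplx x) (cplx y) = gC (cplx y) (cplx x)" for x y
    using hm by (simp add: extf_cplx g_bilinear hermitian_metric_def)
qed (simp_all add: complexification_rules)

lemma gC_J: "gC (ext1 J X) (ext1 J Y) = gC X Y"
proof (rule complexification_eqI2[of "(*)" "\<lambda>X Y. gC (ext1 J X) (ext1 J Y)" gC])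
  show "gC (ext1 J (cplx x)) (ext1 J (cplx y)) = gC (cplx x) (cplx y)" for x y
    using hm by (simp add: extf_cplx ext1_cplx J_linear g_bilinear hermitian_metric_def)
qed (simp_all add: complexification_rules)

lemma nabC_J: "nabC X (ext1 J Y) = ext1 J (nabC X Y)"
proof (rule complexification_eqI2[of "(*s)" "\<lambda>X Y. nabC X (ext1 J Y)" "\<lambda>X Y. ext1 J (nabC X Y)"])
  show "nabC (cplx x) (ext1 J (cplx y)) = ext1 J (nabC (cplx x) (cplx y))" for x y
    using chern by (simp add: ext2_cplx ext1_cplx J_linear nab_bilinear chern_connection_def)
qed (simp_all add: complexification_rules)

lemma nabC_metric: "gC (nabC X Y) W = - gC Y (nabC X W)"
proof -
  have real_W: "gC (nabC X Y) (cplx w) + gC Y (nabC X (cplx w)) = 0" for w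
  proof (rule complexification_eqI2[of "(*)" "\<lambda>X Y. gC (nabC X Y) (cplx w) + gC Y (nabC X (cplx w))"
        "\<lambda>X Y. 0"])
    show "gC (nabC (cplx x) (cplx y)) (cplx w) + gC (cplx y) (nabC (cplx x) (cplx w)) = 0" for x y
      using chern by (simp add: ext2_cplx extf_cplx nab_bilinear g_bilinear chern_connection_def
          flip: of_real_add)
  qed (simp_all add: complexification_rules)
  have "gC (nabC X Y) W + gC Y (nabC X W) = 0"
    by (rule complexification_eqI[of "(*)" "\<lambda>W. gC (nabC X Y) W + gC Y (nabC X W)" "\<lambda>W. 0"])
       (simp_all add: complexification_rules real_W)
  then show ?thesis
    by (simp add: eq_neg_iff_add_eq_0)
qed

lemma type10_p10: "type10 J (p10 J X)"
  by (simp add: type10_def p10_def complexified_linear ext1_J_J vec_eq_iff algebra_simps)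

lemma type01_p01: "type01 J (p01 J X)"
  by (simp add: type01_def p01_def complexified_linear ext1_J_J vec_eq_iff algebra_simps)

lemma p10_idem: "p10 J (p10 J X) = p10 J X"
  by (rule p10_type10[OF type10_p10])

lemma p01_idem: "p01 J (p01 J X) = p01 J X"
  by (rule p01_type01[OF type01_p01])

lemma gC_type10: "type10 J X \<Longrightarrow> type10 J Y \<Longrightarrow> gC X Y = 0"
  using gC_J[of X Y] by (simp add: type10_def complexified_linear)

lemma gC_type01: "type01 J X \<Longrightarrow> type01 J Y \<Longrightarrow> gC X Y = 0"
  using gC_J[of X Y] by (simp add: type01_def complexified_linear)

lemma type10_nabC: "type10 J Y \<Longrightarrow> type10 J (nabC X Y)"
  by (simp add: type10_def complexified_linear flip: nabC_J)

lemma type01_nabC: "type01 J Y \<Longrightarrow> type01 J (nabC X Y)"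
  by (simp add: type01_def complexified_linear flip: nabC_J)

text \<open>Applying the vanishing of the (1,1)-torsion to \<open>X\<close> and \<open>Y\<close> and splitting the identity
  into types: \<open>nabC X Y\<close> has type (0,1) and \<open>nabC Y X\<close> has type (1,0).\<close>

lemma chern_mixed:
  assumes X: "type10 J X" and Y: "type01 J Y"
  shows "nabC X Y = p01 J (brC X Y)" and "nabC Y X = p10 J (brC Y X)"
proof -
  have "torsC mu nab (p10 J X) (p01 J Y) = 0"
    using chern by (simp add: chern_connection_def)
  then have torsion: "nabC X Y - nabC Y X - brC X Y = 0"
    by (simp add: p10_type10[OF X] p01_type01[OF Y] torsC_def)
  have "type01 J (nabC X Y)" "type10 J (nabC Y X)"
    using X Y by (simp_all add: type01_nabC type10_nabC)
  then have proj: "p01 J (nabC X Y) = nabC X Y" "p10 J (nabC X Y) = 0"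
      "p10 J (nabC Y X) = nabC Y X" "p01 J (nabC Y X) = 0"
    by (simp_all add: p01_type01 p10_type01 p10_type10 p01_type10)
  show "nabC X Y = p01 J (brC X Y)"
    using arg_cong[OF torsion, of "p01 J"] by (simp add: complexified_linear proj)
  show "nabC Y X = p10 J (brC Y X)"
    using arg_cong[OF torsion, of "p10 J"] brC_antisym[of Y X]
    by (simp add: complexified_linear proj minus_equation_iff[of "nabC Y X"])
qed

lemma gC_nabC_10:
  assumes "type10 J X" "type01 J W"
  shows "gC (nabC X Y) W = - gC (p01 J (brC X W)) Y"
  using assms by (simp add: nabC_metric chern_mixed gC_sym[of Y])

lemma gC_nabC_01:
  assumes "type01 J X" "type10 J W"
  shows "gC (nabC X Y) W = - gC (p10 J (brC X W)) Y"
  using assms by (simp add: nabC_metric chern_mixed gC_sym[of Y])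

lemma torsion_pairing_10:
  assumes "type10 J X" "type10 J Y" "type01 J W"
  shows "gC (torsC mu nab X Y) W =
    gC (p01 J (brC Y W)) X - gC (p01 J (brC X W)) Y - gC (brC X Y) W"
  using assms by (simp add: torsC_def complexified_linear gC_nabC_10)

lemma torsion_pairing_01:
  assumes "type01 J X" "type01 J Y" "type10 J W"
  shows "gC (torsC mu nab X Y) W =
    gC (p10 J (brC Y W)) X - gC (p10 J (brC X W)) Y - gC (brC X Y) W"
  using assms by (simp add: torsC_def complexified_linear gC_nabC_01)

end

section \<open>Unitary frames\<close>

locale chern_unitary_frame = hermitian_chern mu J g nab
  for mu :: "real^'m \<Rightarrow> real^'m \<Rightarrow> real^'m" and J g nab +
  fixes n :: nat and Z
  assumes frame: "unitary_frame J g n Z"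
begin

abbreviation "Zb c \<equiv> conjv (Z c)"

lemma type10_Z: "c < n \<Longrightarrow> type10 J (Z c)"
  using frame by (simp add: unitary_frame_def type10_def)

lemma type01_Zb: "c < n \<Longrightarrow> type01 J (Zb c)"
  using type10_Z[of c] by (simp add: type10_def type01_def vec_eq_iff flip: conjv_ext1)

lemma gC_Z_Zb: "a < n \<Longrightarrow> b < n \<Longrightarrow> gC (Z a) (Zb b) = (if a = b then 1 else 0)"
  using frame by (simp add: unitary_frame_def)

lemma gC_Zb_Z: "a < n \<Longrightarrow> b < n \<Longrightarrow> gC (Zb a) (Z b) = (if a = b then 1 else 0)"
  using gC_Z_Zb[of b a] by (auto simp: gC_sym)

lemma frame_expansion: "X = (\<Sum>c<n. gC X (Zb c) *s Z c) + (\<Sum>c<n. gC X (Z c) *s Zb c)"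
proof -
  define v where "v = case_sum Z Zb"
  define \<phi> where "\<phi> = case_sum (\<lambda>c X. gC X (Zb c)) (\<lambda>c X. gC X (Z c))"
  have "X = (\<Sum>a\<in>{..<n} <+> {..<n}. \<phi> a X *s v a)"
  proof (rule biorthogonal_expansion)
    show "card ({..<n} <+> {..<n}) = CARD('m)"
      using frame by (simp add: card_Plus unitary_frame_def)
    show "Vector_Spaces.linear (*s) (*) (\<phi> a)" for a
      by (cases a) (simp_all add: \<phi>_def extf_linear_left)
    show "\<phi> a (v b) = (if a = b then 1 else 0)"
      if "a \<in> {..<n} <+> {..<n}" "b \<in> {..<n} <+> {..<n}" for a b
      using that by (auto simp: \<phi>_def v_def gC_Z_Zb gC_Zb_Z gC_type10 gC_type01 type10_Z type01_Zb
          split: if_splits)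
  qed simp
  then show ?thesis
    by (simp add: sum.Plus \<phi>_def v_def comp_def)
qed

lemma p10_frame: "p10 J X = (\<Sum>c<n. gC X (Zb c) *s Z c)"
proof -
  have coeff_Zb: "gC (p10 J X) (Zb c) = gC X (Zb c)" if "c < n" for c
    using arg_cong[OF p10_plus_p01[of J X], of "\<lambda>V. gC V (Zb c)"] that
    by (simp add: complexified_linear gC_type01 type01_p01 type01_Zb)
  have coeff_Z: "gC (p10 J X) (Z c) = 0" if "c < n" for c
    using that by (simp add: gC_type10 type10_p10 type10_Z)
  have "p10 J X = (\<Sum>c<n. gC (p10 J X) (Zb c) *s Z c) + (\<Sum>c<n. gC (p10 J X) (Z c) *s Zb c)"
    by (rule frame_expansion)
  also have "\<dots> = (\<Sum>c<n. gC X (Zb c) *s Z c)"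
    by (simp add: coeff_Zb coeff_Z)
  finally show ?thesis .
qed

lemma p01_frame: "p01 J X = (\<Sum>c<n. gC X (Z c) *s Zb c)"
proof -
  have coeff_Z: "gC (p01 J X) (Z c) = gC X (Z c)" if "c < n" for c
    using arg_cong[OF p10_plus_p01[of J X], of "\<lambda>V. gC V (Z c)"] that
    by (simp add: complexified_linear gC_type10 type10_p10 type10_Z)
  have coeff_Zb: "gC (p01 J X) (Zb c) = 0" if "c < n" for c
    using that by (simp add: gC_type01 type01_p01 type01_Zb)
  have "p01 J X = (\<Sum>c<n. gC (p01 J X) (Zb c) *s Z c) + (\<Sum>c<n. gC (p01 J X) (Z c) *s Zb c)"
    by (rule frame_expansion)
  also have "\<dots> = (\<Sum>c<n. gC X (Z c) *s Zb c)"
    by (simp add: coeff_Zb coeff_Z)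
  finally show ?thesis .
qed

lemma sum_frame_10:
  assumes "Vector_Spaces.linear (*s) (*) f"
  shows "(\<Sum>c<n. gC X (Zb c) * f (Z c)) = f (p10 J X)"
proof -
  interpret f: Vector_Spaces.linear "(*s)" "(*)" f by (fact assms)
  show ?thesis
    by (simp add: p10_frame f.sum f.scale)
qed

lemma sum_frame_01:
  assumes "Vector_Spaces.linear (*s) (*) f"
  shows "(\<Sum>c<n. gC X (Z c) * f (Zb c)) = f (p01 J X)"
proof -
  interpret f: Vector_Spaces.linear "(*s)" "(*)" f by (fact assms)
  show ?thesis
    by (simp add: p01_frame f.sum f.scale)
qed

lemma sum_frame_pairing: "(\<Sum>p<n. gC X (Z p) * gC Y (Zb p)) = gC Y (p01 J X)"
  by (rule sum_frame_01) (simp add: extf_linear_right)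

end

section \<open>Central brackets and the curvature and torsion terms\<close>

locale central_chern_frame = chern_unitary_frame mu J g nab n Z
  for mu :: "real^'m \<Rightarrow> real^'m \<Rightarrow> real^'m" and J g nab n Z +
  assumes bracket_central: "\<forall>X Y W. mu (mu X Y) W = 0"
    and J_bracket_central: "\<forall>X Y W. mu (J (mu X Y)) W = 0"
begin

lemma brC_brC: "brC (brC X Y) W = 0"
proof (rule complexification_eqI2[of "(*s)" "\<lambda>X Y. brC (brC X Y) W" "\<lambda>X Y. 0"])
  show "brC (brC (cplx x) (cplx y)) W = 0" for x y
    using bracket_central by (simp add: ext2_cplx mu_bilinear ext2_cplx_left_eq_0)
qed (simp_all add: complexification_rules)

lemma brC_J_brC: "brC (ext1 J (brC X Y)) W = 0"
proof (rule complexification_eqI2[of "(*s)" "\<lambda>X Y. brC (ext1 J (brC X Y)) W" "\<lambda>X Y. 0"])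
  show "brC (ext1 J (brC (cplx x) (cplx y))) W = 0" for x y
    using J_bracket_central
    by (simp add: ext2_cplx ext1_cplx mu_bilinear J_linear ext2_cplx_left_eq_0)
qed (simp_all add: complexification_rules)

lemma brC_proj_brC:
  "brC (p10 J (brC X Y)) W = 0" "brC (p01 J (brC X Y)) W = 0"
  "brC W (p10 J (brC X Y)) = 0" "brC W (p01 J (brC X Y)) = 0"
proof -
  show left: "brC (p10 J (brC X Y)) W = 0" "brC (p01 J (brC X Y)) W = 0"
    by (simp_all add: p10_def p01_def complexified_linear brC_brC brC_J_brC)
  show "brC W (p10 J (brC X Y)) = 0" "brC W (p01 J (brC X Y)) = 0"
    by (subst brC_antisym; simp add: left)+
qed

lemma gC_nabC_bracket:
  assumes U: "type10 J U" and V: "type01 J V"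
  shows "gC (nabC (brC X Y) U) V = 0"
proof -
  have "nabC (p01 J (brC X Y)) U = 0"
    using chern_mixed(2)[OF U type01_p01] by (simp add: brC_proj_brC complexified_linear)
  moreover have "gC (nabC (p10 J (brC X Y)) U) V = 0"
    using gC_nabC_10[OF type10_p10 V] by (simp add: brC_proj_brC complexified_linear)
  ultimately show ?thesis
    using arg_cong[OF p10_plus_p01[of J "brC X Y"], of "\<lambda>B. gC (nabC B U) V"]
    by (simp add: complexified_linear)
qed

lemma frame_contraction_central:
  "(\<Sum>p<n. gC (p01 J (brC X W)) (Z p) * gC (p10 J (brC (Zb p) V)) U) = 0"
  "(\<Sum>p<n. gC (p01 J (brC X W)) (Z p) * gC (brC U (Zb p)) V) = 0"
  "(\<Sum>p<n. gC (p01 J (brC X W)) (Z p) * gC (brC (Zb p) U) V) = 0"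
  "(\<Sum>p<n. gC (brC U (Z p)) V * gC (p10 J (brC X W)) (Zb p)) = 0"
  "(\<Sum>p<n. gC (brC (Z p) U) V * gC (p10 J (brC X W)) (Zb p)) = 0"
proof -
  show "(\<Sum>p<n. gC (p01 J (brC X W)) (Z p) * gC (p10 J (brC (Zb p) V)) U) = 0"
    "(\<Sum>p<n. gC (p01 J (brC X W)) (Z p) * gC (brC U (Zb p)) V) = 0"
    "(\<Sum>p<n. gC (p01 J (brC X W)) (Z p) * gC (brC (Zb p) U) V) = 0"
    by (subst sum_frame_01, simp_all add: complexification_rules p01_idem brC_proj_brC)+
  show "(\<Sum>p<n. gC (brC U (Z p)) V * gC (p10 J (brC X W)) (Zb p)) = 0"
    "(\<Sum>p<n. gC (brC (Z p) U) V * gC (p10 J (brC X W)) (Zb p)) = 0"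
    by (subst mult.commute, subst sum_frame_10,
        simp_all add: complexification_rules p10_idem brC_proj_brC)+
qed

text \<open>The term \<open>K\<close>, which cancels between \<open>S_chern\<close> and \<open>Q2\<close>.\<close>

definition mixed_bracket_pairing :: "nat \<Rightarrow> nat \<Rightarrow> complex" where
  "mixed_bracket_pairing j k =
     (\<Sum>r<n. gC (p01 J (brC (Z r) (Zb k))) (p10 J (brC (Zb r) (Z j))))"

lemma curvature_pairing:
  assumes j: "j < n" and k: "k < n" and r: "r < n"
  shows "gC (curvC mu nab (Z r) (Zb r) (Z j)) (Zb k) =
    - gC (p01 J (brC (Z r) (Zb k))) (p10 J (brC (Zb r) (Z j)))
    + (\<Sum>c<n. gC (p01 J (brC (Z r) (Zb c))) (Z j) * gC (p10 J (brC (Zb r) (Z c))) (Zb k))"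
proof -
  have first: "gC (nabC (Z r) (nabC (Zb r) (Z j))) (Zb k) =
      - gC (p01 J (brC (Z r) (Zb k))) (p10 J (brC (Zb r) (Z j)))"
    using gC_nabC_10[OF type10_Z[OF r] type01_Zb[OF k]] chern_mixed(2)[OF type10_Z[OF j] type01_Zb[OF r]]
    by simp
  define C where "C = nabC (Z r) (Z j)"
  have "p10 J C = C"
    unfolding C_def by (rule p10_type10[OF type10_nabC[OF type10_Z[OF j]]])
  then have "gC C (nabC (Zb r) (Zb k)) = (\<Sum>c<n. gC C (Zb c) * gC (Z c) (nabC (Zb r) (Zb k)))"
    by (subst sum_frame_10) (simp_all add: complexification_rules)
  also have "\<dots> = (\<Sum>c<n. gC (p01 J (brC (Z r) (Zb c))) (Z j) * gC (p10 J (brC (Zb r) (Z c))) (Zb k))"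
  proof (rule sum.cong)
    fix c assume "c \<in> {..<n}"
    then have c: "c < n" by simp
    have "gC C (Zb c) = - gC (p01 J (brC (Z r) (Zb c))) (Z j)"
      unfolding C_def by (rule gC_nabC_10[OF type10_Z[OF r] type01_Zb[OF c]])
    moreover have "gC (Z c) (nabC (Zb r) (Zb k)) = - gC (p10 J (brC (Zb r) (Z c))) (Zb k)"
      using nabC_metric[of "Zb r" "Z c" "Zb k"] chern_mixed(2)[OF type10_Z[OF c] type01_Zb[OF r]]
      by simp
    ultimately show "gC C (Zb c) * gC (Z c) (nabC (Zb r) (Zb k)) =
        gC (p01 J (brC (Z r) (Zb c))) (Z j) * gC (p10 J (brC (Zb r) (Z c))) (Zb k)"
      by simp
  qed simp
  finally have second: "gC (nabC (Zb r) (nabC (Z r) (Z j))) (Zb k) =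
      - (\<Sum>c<n. gC (p01 J (brC (Z r) (Zb c))) (Z j) * gC (p10 J (brC (Zb r) (Z c))) (Zb k))"
    by (simp add: nabC_metric C_def)
  have third: "gC (nabC (brC (Z r) (Zb r)) (Z j)) (Zb k) = 0"
    by (rule gC_nabC_bracket[OF type10_Z[OF j] type01_Zb[OF k]])
  show ?thesis
    by (simp add: curvC_def complexified_linear first second third)
qed

lemma S_chern_frame:
  assumes "j < n" and "k < n"
  shows "S_chern mu g nab n Z j k = - mixed_bracket_pairing j k +
    (\<Sum>r<n. \<Sum>s<n. gC (p01 J (brC (Z s) (Zb r))) (Z j) * gC (p10 J (brC (Zb s) (Z r))) (Zb k))"
proof -
  have "S_chern mu g nab n Z j k = - mixed_bracket_pairing j k +
      (\<Sum>s<n. \<Sum>r<n. gC (p01 J (brC (Z s) (Zb r))) (Z j) * gC (p10 J (brC (Zb s) (Z r))) (Zb k))"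
    using assms
    by (simp add: S_chern_def mixed_bracket_pairing_def curvature_pairing sum_subtractf)
  then show ?thesis
    by (subst (asm) sum.swap)
qed

lemma Q2_frame:
  assumes j: "j < n" and k: "k < n"
  shows "Q2 mu g nab n Z j k = 2 * mixed_bracket_pairing j k +
    (\<Sum>r<n. \<Sum>s<n. gC (brC (Zb s) (Zb r)) (Z j) * gC (brC (Z s) (Z r)) (Zb k))"
proof -
  define A where "A r p = gC (p01 J (brC (Z r) (Zb k))) (Z p)" for r p
  define A' where "A' r p = gC (p10 J (brC (Zb r) (Z j))) (Zb p)" for r p
  define B where "B r p = gC (brC (Z r) (Z p)) (Zb k)" for r p
  define B' where "B' r p = gC (brC (Zb r) (Zb p)) (Z j)" for r p
  have AA': "(\<Sum>p<n. A r p * A' r p) =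
      gC (p01 J (brC (Z r) (Zb k))) (p10 J (brC (Zb r) (Z j)))" for r
    unfolding A_def A'_def sum_frame_pairing p01_idem by (rule gC_sym)
  have vanish: "(\<Sum>p<n. A r p * A' p r) = 0" "(\<Sum>p<n. A r p * B' r p) = 0"
    "(\<Sum>p<n. A r p * B' p r) = 0" "(\<Sum>p<n. B r p * A' r p) = 0" "(\<Sum>p<n. B p r * A' r p) = 0"
    for r
    by (simp_all add: A_def A'_def B_def B'_def frame_contraction_central)
  have "Q2 mu g nab n Z j k = (\<Sum>r<n. \<Sum>p<n. (A p r - A r p - B r p) * (A' p r - A' r p - B' r p))"
    unfolding Q2_def A_def A'_def B_def B'_def using j k
    by (intro sum.cong refl)
       (simp add: torsion_pairing_10 torsion_pairing_01 type10_Z type01_Zb)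
  also have "\<dots> = (\<Sum>r<n. \<Sum>p<n. A p r * A' p r) + (\<Sum>r<n. \<Sum>p<n. A r p * A' r p)
      - (\<Sum>r<n. \<Sum>p<n. A r p * A' p r) - (\<Sum>r<n. \<Sum>p<n. A p r * A' r p)
      + (\<Sum>r<n. \<Sum>p<n. A r p * B' r p) - (\<Sum>r<n. \<Sum>p<n. A p r * B' r p)
      + (\<Sum>r<n. \<Sum>p<n. B r p * A' r p) - (\<Sum>r<n. \<Sum>p<n. B r p * A' p r)
      + (\<Sum>r<n. \<Sum>p<n. B r p * B' r p)"
    by (simp add: algebra_simps sum.distrib sum_subtractf)
  also have "\<dots> = 2 * mixed_bracket_pairing j k + (\<Sum>r<n. \<Sum>p<n. B r p * B' r p)"
    by (simp add: sum.swap[of "\<lambda>r p. A p r * A' p r"] sum.swap[of "\<lambda>r p. A p r * A' r p"]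
        sum.swap[of "\<lambda>r p. A p r * B' r p"] sum.swap[of "\<lambda>r p. B r p * A' p r"]
        AA' vanish mixed_bracket_pairing_def)
  also have "(\<Sum>r<n. \<Sum>p<n. B r p * B' r p) =
      (\<Sum>r<n. \<Sum>s<n. gC (brC (Zb s) (Zb r)) (Z j) * gC (brC (Z s) (Z r)) (Zb k))"
    unfolding B_def B'_def by (subst sum.swap) (simp add: mult.commute)
  finally show ?thesis .
qed

lemma Theta_frame:
  assumes "j < n" and "k < n"
  shows "Theta mu g nab n Z j k =
    (\<Sum>r<n. \<Sum>s<n.
        gC (p01 J (brC (Z s) (Zb r))) (Z j) * gC (p10 J (brC (Zb s) (Z r))) (Zb k)
      + (1/2) * (gC (brC (Zb s) (Zb r)) (Z j) * gC (brC (Z s) (Z r)) (Zb k)))"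
  using assms
  by (simp add: Theta_def S_chern_frame Q2_frame sum.distrib sum_distrib_left algebra_simps)

end

theorem proposition2p1:
  fixes mu :: "real^'m \<Rightarrow> real^'m \<Rightarrow> real^'m"
    and J :: "real^'m \<Rightarrow> real^'m"
    and g :: "real^'m \<Rightarrow> real^'m \<Rightarrow> real"
    and nab :: "real^'m \<Rightarrow> real^'m \<Rightarrow> real^'m"
    and n :: nat and Z :: "nat \<Rightarrow> complex^'m" and j k :: nat
  assumes "lie_algebra mu"
    and "two_step_nilpotent mu"
    and "complex_structure mu J"
    and "hermitian_metric J g"
    and "\<forall>X Y W. mu (J (mu X Y)) W = 0"
    and "chern_connection mu J g nab"
    and "unitary_frame J g n Z"
    and "j < n" and "k < n"
  shows "Theta mu g nab n Z j k =
    (\<Sum>r<n. \<Sum>s<n.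
        extf g (p01 J (ext2 mu (Z s) (conjv (Z r)))) (Z j) *
        extf g (p10 J (ext2 mu (conjv (Z s)) (Z r))) (conjv (Z k))
      + (1/2) * (extf g (ext2 mu (conjv (Z s)) (conjv (Z r))) (Z j) *
                 extf g (ext2 mu (Z s) (Z r)) (conjv (Z k))))"
proof -
  interpret central_chern_frame mu J g nab n Z
    using assms by unfold_locales (auto simp: two_step_nilpotent_def)
  show ?thesis
    using assms(8,9) by (rule Theta_frame)
qed

end
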